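(* Let $E$ be a regular biordered set satisfying: (E1) there exists $0\in E$ with $0\,\omega\,e$ for every $e\in E$; (E2) there is a map $e\mapsto e'$ on $E$ such that for all $e,f\in E$: (i) $(e')'=e$; (ii) $f\,\omega^l\,e$ iff $e'\,\omega^r\,f'$; (iii) $f\,\omega^l\,e'$ iff $M(f,e)=\{0\}$; (E3) for all $e,f\in E$, if $f\,\omega\,e'$ then $S(e',f')\cap S(f',e')\ne\emptyset$. If $e,f\in E$ satisfy $f\,\omega\,e'$, then $S(e',f')\cap S(f',e')$ consists of exactly one element.
   Context: A regular biordered set is a partial algebra isomorphic to the set of idempotents $E(S)$ of a regular semigroup $S$ (regular: every $x$ has $y$ with $xyx=x$), where $ef$ (computed in $S$) is defined when $\{ef,fe\}\cap\{e,f\}\ne\emptyset$. In $E$: $\omega^l=\{(e,f): ef=e\}$, $\omega^r=\{(e,f): fe=e\}$, $\omega=\omega^l\cap\omega^r$; $M(e,f)=\{g\in E: g\,\omega^l\,e,\ g\,\omega^r\,f\}$; for $g,h\in M(e,f)$, $g\preceq h$ iff $eg\,\omega^r\,eh$ and $gf\,\omega^l\,hf$; $S(e,f)=\{h\in M(e,f): g\preceq h\text{ for all }g\in M(e,f)\}$. *)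

theory Defs
  imports Main
begin

text \<open>The regular biordered set is realised as the set of idempotents of a regular
semigroup (every regular biordered set is of this form, up to isomorphism, and all
notions below are invariant under isomorphism of biordered sets).\<close>

definition regular_semigroup :: "('a::semigroup_mult) itself \<Rightarrow> bool" where
  "regular_semigroup _ \<longleftrightarrow> (\<forall>x::'a. \<exists>y. x * y * x = x)"

definition Idem :: "('a::semigroup_mult) set" where
  "Idem = {e. e * e = e}"

definition omega_l :: "'a::semigroup_mult \<Rightarrow> 'a \<Rightarrow> bool" where
  "omega_l e f \<longleftrightarrow> e * f = e"

definition omega_r :: "'a::semigroup_mult \<Rightarrow> 'a \<Rightarrow> bool" where
  "omega_r e f \<longleftrightarrow> f * e = e"

definition omega :: "'a::semigroup_mult \<Rightarrow> 'a \<Rightarrow> bool" where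
  "omega e f \<longleftrightarrow> omega_l e f \<and> omega_r e f"

definition Mset :: "'a::semigroup_mult \<Rightarrow> 'a \<Rightarrow> 'a set" where
  "Mset e f = {g \<in> Idem. omega_l g e \<and> omega_r g f}"

definition sprec :: "'a::semigroup_mult \<Rightarrow> 'a \<Rightarrow> 'a \<Rightarrow> 'a \<Rightarrow> bool" where
  "sprec e f g h \<longleftrightarrow> omega_r (e * g) (e * h) \<and> omega_l (g * f) (h * f)"

definition Sand :: "'a::semigroup_mult \<Rightarrow> 'a \<Rightarrow> 'a set" where
  "Sand e f = {h \<in> Mset e f. \<forall>g \<in> Mset e f. sprec e f g h}"

end

theory Submission
  imports Defs
begin

text \<open>Existence is exactly (E3). Uniqueness holds in every semigroup, for any \<open>a, b\<close>:
an element \<open>h\<close> of both \<open>M(a,b)\<close> and \<open>M(b,a)\<close> satisfies \<open>ah = ha = h = bh = hb\<close>, so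
for two such elements \<open>h, k\<close> lying in \<open>S(a,b) \<inter> S(b,a)\<close> the relation \<open>h \<preceq> k\<close> in \<open>M(a,b)\<close>
reads \<open>kh = h\<close>, while \<open>k \<preceq> h\<close> in \<open>M(b,a)\<close> reads \<open>kh = k\<close>.\<close>

lemma Mset_Int_Mset_absorb:
  assumes "h \<in> Mset a b" and "h \<in> Mset b a"
  shows "a * h = h" and "h * a = h" and "b * h = h" and "h * b = h"
  using assms unfolding Mset_def omega_l_def omega_r_def by auto

lemma Sand_Int_Sand_unique:
  fixes a b h k :: "'a::semigroup_mult"
  assumes h: "h \<in> Sand a b \<inter> Sand b a" and k: "k \<in> Sand a b \<inter> Sand b a"
  shows "h = k"
proof -
  have hM: "h \<in> Mset a b" "h \<in> Mset b a" and kM: "k \<in> Mset a b" "k \<in> Mset b a"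
    using h k unfolding Sand_def by auto
  have "sprec a b h k"
    using hM(1) k unfolding Sand_def by auto
  then have "k * h = h"
    using Mset_Int_Mset_absorb[OF hM] Mset_Int_Mset_absorb[OF kM]
    unfolding sprec_def omega_r_def by simp
  moreover have "sprec b a k h"
    using kM(2) h unfolding Sand_def by auto
  then have "k * h = k"
    using Mset_Int_Mset_absorb[OF hM] Mset_Int_Mset_absorb[OF kM]
    unfolding sprec_def omega_l_def by simp
  ultimately show ?thesis by simp
qed

theorem proposition5p2:
  fixes zero :: "'a::semigroup_mult" and cmp :: "'a \<Rightarrow> 'a" and e f :: 'a
  assumes reg: "regular_semigroup TYPE('a)"
    and E1: "zero \<in> Idem" "\<forall>x \<in> Idem. omega zero x"
    and E2_map: "\<forall>x \<in> Idem. cmp x \<in> Idem"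
    and E2i: "\<forall>x \<in> Idem. cmp (cmp x) = x"
    and E2ii: "\<forall>x \<in> Idem. \<forall>y \<in> Idem. omega_l y x \<longleftrightarrow> omega_r (cmp x) (cmp y)"
    and E2iii: "\<forall>x \<in> Idem. \<forall>y \<in> Idem. omega_l y (cmp x) \<longleftrightarrow> Mset y x = {zero}"
    and E3: "\<forall>x \<in> Idem. \<forall>y \<in> Idem. omega y (cmp x) \<longrightarrow>
               Sand (cmp x) (cmp y) \<inter> Sand (cmp y) (cmp x) \<noteq> {}"
    and e: "e \<in> Idem" and f: "f \<in> Idem" and fe: "omega f (cmp e)"
  shows "\<exists>!h. h \<in> Sand (cmp e) (cmp f) \<inter> Sand (cmp f) (cmp e)"
proof -
  obtain h where "h \<in> Sand (cmp e) (cmp f) \<inter> Sand (cmp f) (cmp e)"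
    using E3 e f fe by blast
  then show ?thesis
    using Sand_Int_Sand_unique by blast
qed

end
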